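(* Assume $x\mapsto\mathfrak S(x,z,\xi_i)$ is continuously differentiable for every $z$ and $i$, and define $\Delta_X^{(t)}\equiv\frac1m\sum_{i\in[m]}(\mathrm{id}-\mathbb E^{(0)})X_i\,\mathfrak S(\langle X_i,\mathrm u_X^{(t)}\rangle,\langle X_i,\mu_\ast\rangle,\xi_i)\in\mathbb R^n$. Then for every $t\ge1$, $$\|\mu^{(t)}-\mathrm u_X^{(t)}\|\le\|\eta_{[0:t)}\|_\infty\,\mathfrak M^{(t-1)}_{\mu^{(\cdot)},\mathrm u_X^{(\cdot)}}(X)\max_{s\in[1:t]}\|\Delta_X^{(s-1)}\|.$$
   Context: Let $m,n\ge1$. Let $X\in\mathbb R^{m\times n}$ be a random matrix with rows $X_1,\dots,X_m$; $\mu_\ast\in\mathbb R^n$, $\xi=(\xi_1,\dots,\xi_m)$, $\mathcal F:\mathbb R^2\to\mathbb R$, $Y_i=\mathcal F(\langle X_i,\mu_\ast\rangle,\xi_i)$; $\mathsf L:\mathbb R^2\to\mathbb R$ a loss, $\mathfrak S(x_0,z_0,\xi_0)\equiv\partial_1\mathsf L(x_0,\mathcal F(z_0,\xi_0))$, $\partial_1\mathfrak S$ its derivative in $x_0$. Gradient descent: $\mu^{(t)}=\mu^{(t-1)}-\frac{\eta_{t-1}}{m}X^\top\mathfrak S(X\mu^{(t-1)},X\mu_\ast,\xi)$ (componentwise) with initialization $\mu^{(0)}$ and step sizes $\eta_s>0$. $X$ is independent of $(\mu^{(0)},\mu_\ast,\xi)$ and $\mathbb E^{(0)}$ is expectation conditional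 on $(\mu^{(0)},\mu_\ast,\xi)$ (assume all expectations finite). Theoretical gradient descent: $\mathrm u_X^{(0)}=\mu^{(0)}$, $\mathrm u_X^{(t)}=\mathrm u_X^{(t-1)}-\frac{\eta_{t-1}}{m}\mathbb E^{(0)}X^\top\mathfrak S(X\mathrm u_X^{(t-1)},X\mu_\ast,\xi)$. Let $U\sim\mathrm{Unif}[0,1]$, $\pi_m\sim\mathrm{Unif}\{1,\dots,m\}$ be independent of everything. For $\mathrm u,\mathrm v$: $M_{\mathrm u,\mathrm v}(X)\equiv\mathbb E_{U,\pi_m}\partial_1\mathfrak S(\langle X_{\pi_m},U\mathrm u+(1-U)\mathrm v\rangle,\langle X_{\pi_m},\mu_\ast\rangle,\xi_{\pi_m})X_{\pi_m}X_{\pi_m}^\top$ (expectation over $U,\pi_m$ only), and for sequences $\mathfrak M^{(t)}_{\mathrm u^{(\cdot)},\mathrm v^{(\cdot)}}(X)\equiv1+\max_{\tau\in[0:t]}\sum_{s\in[0:\tau]}\prod_{r\in[s:\tau]}\|I_n-\eta_rM_{\mathrm u^{(r)},\mathrm v^{(r)}}(X)\|_{op}$. $[a:b]=\{a,\dots,b\}$, $\|\eta_{[0:t)}\|_\infty=\max_{0\le s<t}\eta_s$. *)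

theory Defs
  imports "HOL-Probability.Probability"
begin

definition frakS :: "(real \<Rightarrow> real \<Rightarrow> real) \<Rightarrow> (real \<Rightarrow> real \<Rightarrow> real) \<Rightarrow> real \<Rightarrow> real \<Rightarrow> real \<Rightarrow> real" where
  "frakS L F x z \<xi> = deriv (\<lambda>a. L a (F z \<xi>)) x"

definition dfrakS :: "(real \<Rightarrow> real \<Rightarrow> real) \<Rightarrow> (real \<Rightarrow> real \<Rightarrow> real) \<Rightarrow> real \<Rightarrow> real \<Rightarrow> real \<Rightarrow> real" where
  "dfrakS L F x z \<xi> = deriv (\<lambda>a. frakS L F a z \<xi>) x"

definition Svec :: "(real \<Rightarrow> real \<Rightarrow> real) \<Rightarrow> (real \<Rightarrow> real \<Rightarrow> real) \<Rightarrow> real^'n^'m \<Rightarrow> real^'n \<Rightarrow> real^'m \<Rightarrow> real^'n \<Rightarrow> real^'m" where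
  "Svec L F X mustar xi u = (\<chi> i. frakS L F ((X $ i) \<bullet> u) ((X $ i) \<bullet> mustar) (xi $ i))"

primrec gd :: "(real \<Rightarrow> real \<Rightarrow> real) \<Rightarrow> (real \<Rightarrow> real \<Rightarrow> real) \<Rightarrow> real^'n^'m \<Rightarrow> real^'n \<Rightarrow> real^'m
    \<Rightarrow> (nat \<Rightarrow> real) \<Rightarrow> real^'n \<Rightarrow> nat \<Rightarrow> real^'n" where
  "gd L F X mustar xi eta mu0 0 = mu0"
| "gd L F X mustar xi eta mu0 (Suc t) =
     gd L F X mustar xi eta mu0 t
     - (eta t / real CARD('m)) *\<^sub>R (transpose X *v Svec L F X mustar xi (gd L F X mustar xi eta mu0 t))"

text \<open>Theoretical gradient descent u_X^(t); the conditional expectation E^(0) given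
  (mu0, mustar, xi) is the integral over the law of the random matrix Xr (X independent of them).\<close>
primrec theo_gd :: "'w measure \<Rightarrow> ('w \<Rightarrow> real^'n^'m) \<Rightarrow> (real \<Rightarrow> real \<Rightarrow> real) \<Rightarrow> (real \<Rightarrow> real \<Rightarrow> real)
    \<Rightarrow> real^'n \<Rightarrow> real^'m \<Rightarrow> (nat \<Rightarrow> real) \<Rightarrow> real^'n \<Rightarrow> nat \<Rightarrow> real^'n" where
  "theo_gd M Xr L F mustar xi eta mu0 0 = mu0"
| "theo_gd M Xr L F mustar xi eta mu0 (Suc t) =
     theo_gd M Xr L F mustar xi eta mu0 t
     - (eta t / real CARD('m)) *\<^sub>R
         (\<integral>w. transpose (Xr w) *v Svec L F (Xr w) mustar xi (theo_gd M Xr L F mustar xi eta mu0 t) \<partial>M)"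

definition Delta :: "'w measure \<Rightarrow> ('w \<Rightarrow> real^'n^'m) \<Rightarrow> (real \<Rightarrow> real \<Rightarrow> real) \<Rightarrow> (real \<Rightarrow> real \<Rightarrow> real)
    \<Rightarrow> real^'n \<Rightarrow> real^'m \<Rightarrow> (nat \<Rightarrow> real) \<Rightarrow> real^'n \<Rightarrow> 'w \<Rightarrow> nat \<Rightarrow> real^'n" where
  "Delta M Xr L F mustar xi eta mu0 w t =
    (let u = theo_gd M Xr L F mustar xi eta mu0 t in
     (1 / real CARD('m)) *\<^sub>R
       (\<Sum>i\<in>UNIV. frakS L F ((Xr w $ i) \<bullet> u) ((Xr w $ i) \<bullet> mustar) (xi $ i) *\<^sub>R (Xr w $ i)
          - (\<integral>w'. frakS L F ((Xr w' $ i) \<bullet> u) ((Xr w' $ i) \<bullet> mustar) (xi $ i) *\<^sub>R (Xr w' $ i) \<partial>M)))"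

definition outer :: "real^'n \<Rightarrow> real^'n^'n" where
  "outer x = (\<chi> j k. x $ j * x $ k)"

text \<open>M_{u,v}(X): expectation over U ~ Unif[0,1] and pi_m ~ Unif{1..m}.\<close>
definition Mmat :: "(real \<Rightarrow> real \<Rightarrow> real) \<Rightarrow> (real \<Rightarrow> real \<Rightarrow> real) \<Rightarrow> real^'n^'m \<Rightarrow> real^'n \<Rightarrow> real^'m
    \<Rightarrow> real^'n \<Rightarrow> real^'n \<Rightarrow> real^'n^'n" where
  "Mmat L F X mustar xi u v =
    (1 / real CARD('m)) *\<^sub>R
      (\<Sum>i\<in>UNIV. integral {0..1::real}
         (\<lambda>U. dfrakS L F ((X $ i) \<bullet> (U *\<^sub>R u + (1 - U) *\<^sub>R v)) ((X $ i) \<bullet> mustar) (xi $ i) *\<^sub>R outer (X $ i)))"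

definition frakM :: "(real \<Rightarrow> real \<Rightarrow> real) \<Rightarrow> (real \<Rightarrow> real \<Rightarrow> real) \<Rightarrow> real^'n^'m \<Rightarrow> real^'n \<Rightarrow> real^'m
    \<Rightarrow> (nat \<Rightarrow> real) \<Rightarrow> (nat \<Rightarrow> real^'n) \<Rightarrow> (nat \<Rightarrow> real^'n) \<Rightarrow> nat \<Rightarrow> real" where
  "frakM L F X mustar xi eta us vs t =
    1 + Max ((\<lambda>\<tau>. \<Sum>s\<in>{0..\<tau>}. \<Prod>r\<in>{s..\<tau>}.
               onorm (\<lambda>x. (mat 1 - eta r *\<^sub>R Mmat L F X mustar xi (us r) (vs r)) *v x)) ` {0..t})"

end

theory Submission
  imports Defs
begin

text \<open>The error e t = mu^(t) - u^(t) obeys the perturbed linear recursion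
  e (t+1) = (I - eta_t M_t) e t - eta_t Delta^(t), with M_t = M_{mu^(t),u^(t)}(X) and e 0 = 0:
  by the mean value theorem in integral form, the difference of the empirical gradients at
  mu^(t) and u^(t) is M_t (mu^(t) - u^(t)), and what is left of the two gradient steps is the
  centred empirical gradient Delta^(t) at u^(t). Unrolling the recursion gives
  |e t| \<le> \<Sum>_{s<t} eta_s |Delta^(s)| \<Prod>_{s<r<t} |I - eta_r M_r|, which is bounded by the
  product of the three maxima. The bound holds for every realisation X separately; of the
  probabilistic hypotheses only the integrability of the expected gradients is needed.\<close>

lemma norm_linear_recursion_le:
  fixes e D :: "nat \<Rightarrow> 'a::real_normed_vector" and A :: "nat \<Rightarrow> 'a \<Rightarrow> 'a"
  assumes "e 0 = 0" and "\<And>t. e (Suc t) = A t (e t) - D t" and "\<And>t. bounded_linear (A t)"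
  shows "norm (e t) \<le> (\<Sum>s<t. norm (D s) * (\<Prod>r\<in>{Suc s..<t}. onorm (A r)))"
proof (induction t)
  case 0
  then show ?case
    using assms(1) by simp
next
  case (Suc t)
  have "norm (e (Suc t)) \<le> onorm (A t) * norm (e t) + norm (D t)"
    unfolding assms(2) using onorm[OF assms(3)] norm_triangle_ineq4 order_trans add_right_mono by metis
  also have "\<dots> \<le> onorm (A t) * (\<Sum>s<t. norm (D s) * (\<Prod>r\<in>{Suc s..<t}. onorm (A r))) + norm (D t)"
    using Suc.IH onorm_pos_le[OF assms(3)] by (simp add: mult_left_mono)
  also have "\<dots> = (\<Sum>s<Suc t. norm (D s) * (\<Prod>r\<in>{Suc s..<Suc t}. onorm (A r)))"
    by (simp add: sum_distrib_left prod.atLeastLessThan_Suc algebra_simps)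
  finally show ?case .
qed

lemma sum_prod_tail_le:
  fixes a :: "nat \<Rightarrow> real"
  assumes "\<And>r. 0 \<le> a r"
  shows "(\<Sum>s<Suc k. \<Prod>r\<in>{Suc s..<Suc k}. a r) \<le> 1 + Max ((\<lambda>\<tau>. \<Sum>s\<in>{0..\<tau>}. \<Prod>r\<in>{s..\<tau>}. a r) ` {0..k})"
proof -
  have "(\<Sum>s<Suc k. \<Prod>r\<in>{Suc s..<Suc k}. a r) = 1 + (\<Sum>s\<in>Suc ` {..<k}. \<Prod>r\<in>{s..k}. a r)"
    by (simp add: sum.reindex atLeastLessThanSuc_atLeastAtMost)
  also have "\<dots> \<le> 1 + (\<Sum>s\<in>{0..k}. \<Prod>r\<in>{s..k}. a r)"
    by (intro add_left_mono sum_mono2) (auto simp: prod_nonneg assms)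
  also have "\<dots> \<le> 1 + Max ((\<lambda>\<tau>. \<Sum>s\<in>{0..\<tau>}. \<Prod>r\<in>{s..\<tau>}. a r) ` {0..k})"
    by (intro add_left_mono Max_ge) auto
  finally show ?thesis .
qed

lemma norm_perturbed_linear_recursion_le:
  fixes e D :: "nat \<Rightarrow> 'a::real_normed_vector" and A :: "nat \<Rightarrow> 'a \<Rightarrow> 'a" and eta :: "nat \<Rightarrow> real"
  assumes "e 0 = 0" and "\<And>t. e (Suc t) = A t (e t) - eta t *\<^sub>R D t"
    and "\<And>t. bounded_linear (A t)" and "\<And>s. 0 \<le> eta s" and "1 \<le> t"
  shows "norm (e t) \<le> Max (eta ` {0..<t})
      * (1 + Max ((\<lambda>\<tau>. \<Sum>s\<in>{0..\<tau>}. \<Prod>r\<in>{s..\<tau>}. onorm (A r)) ` {0..t - 1}))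
      * Max ((\<lambda>s. norm (D (s - 1))) ` {1..t})"
proof -
  obtain k where t: "t = Suc k"
    using assms(5) by (cases t) auto
  define H where "H = Max (eta ` {0..<t})"
  define B where "B = Max ((\<lambda>s. norm (D (s - 1))) ` {1..t})"
  define P where "P s = (\<Prod>r\<in>{Suc s..<t}. onorm (A r))" for s
  have eta_le: "eta s \<le> H" if "s < t" for s
    unfolding H_def using that by (intro Max_ge) auto
  have D_le: "norm (D s) \<le> B" if "s < t" for s
  proof -
    have "norm (D (Suc s - 1)) \<le> B"
      unfolding B_def using that by (intro Max_ge imageI) auto
    then show ?thesis by simp
  qed
  have "0 \<le> H" and "0 \<le> B"
    using eta_le[of 0] D_le[of 0] assms(4)[of 0] norm_ge_zero[of "D 0"] t by linarith+
  have P_nonneg: "0 \<le> P s" for s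
    unfolding P_def by (simp add: prod_nonneg onorm_pos_le assms(3))
  have "norm (e t) \<le> (\<Sum>s<t. norm (eta s *\<^sub>R D s) * P s)"
    unfolding P_def using assms(1-3) by (rule norm_linear_recursion_le)
  also have "\<dots> \<le> (\<Sum>s<t. H * B * P s)"
    using eta_le D_le assms(4) \<open>0 \<le> H\<close> P_nonneg
    by (intro sum_mono mult_right_mono) (auto intro: mult_mono)
  also have "\<dots> = H * B * (\<Sum>s<t. P s)"
    by (simp add: sum_distrib_left)
  also have "\<dots> \<le> H * B * (1 + Max ((\<lambda>\<tau>. \<Sum>s\<in>{0..\<tau>}. \<Prod>r\<in>{s..\<tau>}. onorm (A r)) ` {0..k}))"
    unfolding P_def t using \<open>0 \<le> H\<close> \<open>0 \<le> B\<close>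
    by (intro mult_left_mono sum_prod_tail_le onorm_pos_le assms(3)) auto
  finally show ?thesis
    by (simp add: H_def B_def t algebra_simps)
qed

lemma outer_mult_vector:
  fixes x d :: "real^'n"
  shows "(c *\<^sub>R outer x) *v d = (c * (x \<bullet> d)) *\<^sub>R x"
  by (simp add: vec_eq_iff matrix_vector_mult_def outer_def inner_vec_def sum_distrib_left
      sum_distrib_right algebra_simps)

lemma sum_matrix_vector_mult:
  fixes B :: "'i \<Rightarrow> 'a::comm_semiring_1^'n^'k"
  shows "sum B I *v d = (\<Sum>i\<in>I. B i *v d)"
  by (induct I rule: infinite_finite_induct) (simp_all add: matrix_vector_mult_add_rdistrib)

lemma vector_matrix_mult_eq_sum_rows:
  fixes X :: "real^'n^'m"
  shows "v v* X = (\<Sum>i\<in>UNIV. v $ i *\<^sub>R X $ i)"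
  by (simp add: vec_eq_iff vector_matrix_mult_def sum_component mult.commute)

lemma integral_deriv_along_line:
  fixes f :: "real \<Rightarrow> real"
  assumes "\<And>y. f differentiable (at y)"
  shows "integral {0..1} (\<lambda>U. deriv f (a + U * c)) * c = f (a + c) - f a"
proof -
  have f': "(f has_real_derivative deriv f y) (at y)" for y
    using assms DERIV_deriv_iff_real_differentiable by blast
  have "((\<lambda>U. f (a + U * c)) has_real_derivative deriv f (a + U * c) * c) (at U)" for U
    by (rule DERIV_chain2[OF f']) (auto intro!: derivative_eq_intros)
  then have "((\<lambda>U. deriv f (a + U * c) * c) has_integral f (a + 1 * c) - f (a + 0 * c)) {0..1}"
    by (intro fundamental_theorem_of_calculus)
       (auto simp: has_real_derivative_iff_has_vector_derivative[symmetric] intro: has_field_derivative_at_within)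
  then have "integral {0..1} (\<lambda>U. deriv f (a + U * c) * c) = f (a + 1 * c) - f (a + 0 * c)"
    by (rule integral_unique)
  then show ?thesis
    by simp
qed

lemma integral_deriv_scaleR_outer_mult:
  fixes f :: "real \<Rightarrow> real" and x p q :: "real^'n"
  assumes "\<And>y. f differentiable (at y)" and "continuous_on UNIV (deriv f)"
  shows "integral {0..1} (\<lambda>U. deriv f (x \<bullet> (U *\<^sub>R p + (1 - U) *\<^sub>R q)) *\<^sub>R outer x) *v (p - q)
    = (f (x \<bullet> p) - f (x \<bullet> q)) *\<^sub>R x"
proof -
  define g where "g U = deriv f (x \<bullet> q + U * (x \<bullet> p - x \<bullet> q))" for U
  have line: "x \<bullet> (U *\<^sub>R p + (1 - U) *\<^sub>R q) = x \<bullet> q + U * (x \<bullet> p - x \<bullet> q)" for U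
    by (simp add: inner_add_right algebra_simps)
  have "g integrable_on {0..1}"
    unfolding g_def
    by (intro integrable_continuous_interval continuous_on_compose2[OF assms(2)] continuous_intros) auto
  then have "integral {0..1} (\<lambda>U. g U *\<^sub>R outer x) = integral {0..1} g *\<^sub>R outer x"
    by (intro integral_unique has_integral_scaleR_left integrable_integral)
  then show ?thesis
    using integral_deriv_along_line[OF assms(1), of "x \<bullet> q" "x \<bullet> p - x \<bullet> q"]
    by (simp add: line g_def[abs_def] outer_mult_vector inner_diff_right)
qed

lemma Mmat_mult_diff:
  fixes X :: "real^'n^'m"
  assumes "\<And>z i x. (\<lambda>a. frakS L F a z (xi $ i)) differentiable (at x)"
    and "\<And>z i. continuous_on UNIV (\<lambda>a. dfrakS L F a z (xi $ i))"
  shows "Mmat L F X mustar xi u v *v (u - v)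
    = (1 / real CARD('m)) *\<^sub>R (transpose X *v (Svec L F X mustar xi u - Svec L F X mustar xi v))"
proof -
  have "integral {0..1} (\<lambda>U. dfrakS L F (X $ i \<bullet> (U *\<^sub>R u + (1 - U) *\<^sub>R v)) (X $ i \<bullet> mustar) (xi $ i)
      *\<^sub>R outer (X $ i)) *v (u - v)
    = (Svec L F X mustar xi u $ i - Svec L F X mustar xi v $ i) *\<^sub>R X $ i" for i
    unfolding dfrakS_def Svec_def vec_lambda_beta
    by (rule integral_deriv_scaleR_outer_mult) (use assms[unfolded dfrakS_def] in auto)
  then show ?thesis
    by (simp add: Mmat_def scaleR_matrix_vector_assoc[symmetric] sum_matrix_vector_mult
        vector_matrix_mult_eq_sum_rows)
qed

lemma integral_transpose_mult_Svec:
  fixes Xr :: "'w \<Rightarrow> real^'n^'m"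
  assumes "\<And>i. integrable M (\<lambda>w'. frakS L F ((Xr w' $ i) \<bullet> u) ((Xr w' $ i) \<bullet> mustar) (xi $ i) *\<^sub>R (Xr w' $ i))"
  shows "(\<integral>w'. transpose (Xr w') *v Svec L F (Xr w') mustar xi u \<partial>M)
    = (\<Sum>i\<in>UNIV. \<integral>w'. frakS L F ((Xr w' $ i) \<bullet> u) ((Xr w' $ i) \<bullet> mustar) (xi $ i) *\<^sub>R (Xr w' $ i) \<partial>M)"
  unfolding transpose_matrix_vector vector_matrix_mult_eq_sum_rows Svec_def vec_lambda_beta
  by (rule Bochner_Integration.integral_sum) (use assms in auto)

lemma Delta_eq:
  fixes M :: "'w measure" and Xr :: "'w \<Rightarrow> real^'n^'m" and L F :: "real \<Rightarrow> real \<Rightarrow> real"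
    and mu0 mustar :: "real^'n" and xi :: "real^'m" and eta :: "nat \<Rightarrow> real" and t :: nat
  defines "u \<equiv> theo_gd M Xr L F mustar xi eta mu0 t"
  assumes "\<And>i. integrable M (\<lambda>w'. frakS L F ((Xr w' $ i) \<bullet> u) ((Xr w' $ i) \<bullet> mustar) (xi $ i) *\<^sub>R (Xr w' $ i))"
  shows "Delta M Xr L F mustar xi eta mu0 w t = (1 / real CARD('m)) *\<^sub>R
    (transpose (Xr w) *v Svec L F (Xr w) mustar xi u - (\<integral>w'. transpose (Xr w') *v Svec L F (Xr w') mustar xi u \<partial>M))"
  unfolding integral_transpose_mult_Svec[OF assms(2)]
  by (simp add: Delta_def Let_def u_def Svec_def vector_matrix_mult_eq_sum_rows sum_subtractf)

lemma gd_sub_theo_gd_Suc: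
  fixes M :: "'w measure" and Xr :: "'w \<Rightarrow> real^'n^'m" and L F :: "real \<Rightarrow> real \<Rightarrow> real"
    and mu0 mustar :: "real^'n" and xi :: "real^'m" and eta :: "nat \<Rightarrow> real" and w :: 'w
  defines "mu \<equiv> gd L F (Xr w) mustar xi eta mu0" and "u \<equiv> theo_gd M Xr L F mustar xi eta mu0"
  assumes "\<And>z i x. (\<lambda>a. frakS L F a z (xi $ i)) differentiable (at x)"
    and "\<And>z i. continuous_on UNIV (\<lambda>a. dfrakS L F a z (xi $ i))"
    and "\<And>i. integrable M (\<lambda>w'. frakS L F ((Xr w' $ i) \<bullet> u t) ((Xr w' $ i) \<bullet> mustar) (xi $ i) *\<^sub>R (Xr w' $ i))"
  shows "mu (Suc t) - u (Suc t)
    = (mat 1 - eta t *\<^sub>R Mmat L F (Xr w) mustar xi (mu t) (u t)) *v (mu t - u t)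
      - eta t *\<^sub>R Delta M Xr L F mustar xi eta mu0 w t"
  unfolding matrix_vector_mult_diff_rdistrib scaleR_matrix_vector_assoc[symmetric]
    Mmat_mult_diff[OF assms(3,4)] Delta_eq[OF assms(5)[unfolded u_def]]
  by (simp add: mu_def u_def algebra_simps)

theorem mainTheorem10:
  fixes M :: "'w measure" and Xr :: "'w \<Rightarrow> real^'n^'m"
    and L F :: "real \<Rightarrow> real \<Rightarrow> real"
    and mu0 mustar :: "real^'n" and xi :: "real^'m"
    and eta :: "nat \<Rightarrow> real" and t :: nat and w :: 'w
  assumes "prob_space M"
    and "Xr \<in> borel_measurable M"
    and "\<And>s. eta s > 0"
    and "\<And>z i x. (\<lambda>a. frakS L F a z (xi $ i)) differentiable (at x)"
    and "\<And>z i. continuous_on UNIV (\<lambda>a. dfrakS L F a z (xi $ i))"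
    and "\<And>s i. integrable M (\<lambda>w'. frakS L F ((Xr w' $ i) \<bullet> theo_gd M Xr L F mustar xi eta mu0 s)
                    ((Xr w' $ i) \<bullet> mustar) (xi $ i) *\<^sub>R (Xr w' $ i))"
    and "w \<in> space M"
    and "t \<ge> 1"
  shows "norm (gd L F (Xr w) mustar xi eta mu0 t - theo_gd M Xr L F mustar xi eta mu0 t)
    \<le> Max (eta ` {0..<t})
      * frakM L F (Xr w) mustar xi eta (gd L F (Xr w) mustar xi eta mu0) (theo_gd M Xr L F mustar xi eta mu0) (t - 1)
      * Max ((\<lambda>s. norm (Delta M Xr L F mustar xi eta mu0 w (s - 1))) ` {1..t})"
proof -
  let ?mu = "gd L F (Xr w) mustar xi eta mu0" and ?u = "theo_gd M Xr L F mustar xi eta mu0"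
  let ?A = "\<lambda>r x. (mat 1 - eta r *\<^sub>R Mmat L F (Xr w) mustar xi (?mu r) (?u r)) *v x"
  have "norm (?mu t - ?u t) \<le> Max (eta ` {0..<t})
      * (1 + Max ((\<lambda>\<tau>. \<Sum>s\<in>{0..\<tau>}. \<Prod>r\<in>{s..\<tau>}. onorm (?A r)) ` {0..t - 1}))
      * Max ((\<lambda>s. norm (Delta M Xr L F mustar xi eta mu0 w (s - 1))) ` {1..t})"
  proof (rule norm_perturbed_linear_recursion_le)
    show "?mu (Suc s) - ?u (Suc s) = ?A s (?mu s - ?u s) - eta s *\<^sub>R Delta M Xr L F mustar xi eta mu0 w s"
      for s
      by (rule gd_sub_theo_gd_Suc[OF assms(4,5) assms(6)])
    show "0 \<le> eta s" for s
      using assms(3) less_imp_le by blast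
  qed (use assms(8) in simp_all)
  then show ?thesis
    unfolding frakM_def .
qed

end
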